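(* Let $\mathcal{P}$ be a Yao-Yao partition of $\mathbb{R}^n$ whose center is $0$. Then $\mathcal{P}^*:=\{A^* : A\in\mathcal{P}\}$ is also a partition of $\mathbb{R}^n$, where for a set $C\subseteq\mathbb{R}^n$, $C^*=\{y\in\mathbb{R}^n : x\cdot y\geq 0 \text{ for all } x\in C\}$.
   Context: $x\cdot y$ is the standard scalar product on $\mathbb{R}^n$. A set $\mathcal{P}$ of subsets of an affine space $E$ is a partition of $E$ if $\bigcup\mathcal{P}=E$ and the interiors of two distinct elements of $\mathcal{P}$ do not intersect. Yao-Yao partitions and their centers are defined by induction on the dimension of a finite-dimensional real affine space $E$ (with associated vector space $\vec{E}$): if $E=\{c\}$ has dimension $0$, then $\{\{c\}\}$ is a Yao-Yao partition of $E$ with center $c$. If $E$ has dimension $n\geq 1$, $\mathcal{P}$ is a Yao-Yao partition of $E$ if there exist an affine hyperplane $F$ of $E$, a vector $v\in\vec{E}\setminus\vec{F}$, and two Yao-Yao partitions $\mathcal{P}_+$, $\mathcal{P}_-$ of $F$ having the same center $c$, such that $\mathcal{P}=\{A+\mathbb{R}_- v : A\in\mathcal{P}_-\}\cup\{A+\mathbb{R}_+ v : A\in\mathcal{P}_+\}$; the center of $\mathcal{P}$ is then $c$. *)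

theory Defs
  imports "HOL-Analysis.Analysis"
begin

definition vec_dir :: "'a::real_vector set \<Rightarrow> 'a set" where
  "vec_dir E = {x - y | x y. x \<in> E \<and> y \<in> E}"

definition ray_plus :: "'a::real_vector set \<Rightarrow> 'a \<Rightarrow> 'a set" where
  "ray_plus A v = {a + t *\<^sub>R v | a t. a \<in> A \<and> t \<ge> 0}"

definition ray_minus :: "'a::real_vector set \<Rightarrow> 'a \<Rightarrow> 'a set" where
  "ray_minus A v = {a + t *\<^sub>R v | a t. a \<in> A \<and> t \<le> 0}"

inductive yao_yao :: "'a::euclidean_space set \<Rightarrow> 'a set set \<Rightarrow> 'a \<Rightarrow> bool" where
  base: "yao_yao {c} {{c}} c"
| step: "\<lbrakk> affine E; aff_dim E \<ge> 1;
           affine F; F \<subseteq> E; aff_dim F = aff_dim E - 1;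
           v \<in> vec_dir E; v \<notin> vec_dir F;
           yao_yao F Pm c; yao_yao F Pp c \<rbrakk>
    \<Longrightarrow> yao_yao E ({ray_minus A v | A. A \<in> Pm} \<union> {ray_plus A v | A. A \<in> Pp}) c"

definition is_partition :: "'a::topological_space set \<Rightarrow> 'a set set \<Rightarrow> bool" where
  "is_partition E P \<longleftrightarrow> \<Union>P = E \<and>
     (\<forall>A\<in>P. \<forall>B\<in>P. A \<noteq> B \<longrightarrow> interior A \<inter> interior B = {})"

definition dual_cone :: "'a::real_inner set \<Rightarrow> 'a set" where
  "dual_cone C = {y. \<forall>x\<in>C. x \<bullet> y \<ge> 0}"

end

theory Submission
  imports Defs
begin

text \<open>With centre 0 the affine spaces of the construction are linear subspaces and every cell
  contains 0, so the dual cone of a cell \<open>ray_plus A u\<close> (u = \<plusminus>v) is the half-space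
  \<open>u \<bullet> y \<ge> 0\<close> intersected with the dual cone of A. Induct on the construction of the partition
  of E: the dual cones cover E, because y lies in the dual cone of a cell A of F iff its
  orthogonal projection to F does; and two dual cones sharing a point of their interiors relative
  to E coincide, because such a point lies strictly on one side of the hyperplane \<open>v \<bullet> y = 0\<close> and
  its projection lies in the relative interiors of the two dual cones in F. For E the whole space,
  relative interior is interior.\<close>

text \<open>Interior of D relative to a fixed ambient subspace E (the library's \<open>rel_interior\<close> is
  relative to the affine hull of D itself).\<close>

definition rel_interior_in :: "'a::metric_space set \<Rightarrow> 'a set \<Rightarrow> 'a set" where
  "rel_interior_in E D = {y \<in> E. \<exists>e>0. ball y e \<inter> E \<subseteq> D}"

lemma rel_interior_in_UNIV: "rel_interior_in UNIV D = interior D"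
  by (auto simp: rel_interior_in_def mem_interior)

lemma rel_interior_in_mono: "D \<subseteq> D' \<Longrightarrow> rel_interior_in E D \<subseteq> rel_interior_in E D'"
  unfolding rel_interior_in_def by blast

lemma dual_cone_antimono: "A \<subseteq> B \<Longrightarrow> dual_cone B \<subseteq> dual_cone A"
  unfolding dual_cone_def by blast

lemma dual_cone_add_orthogonal:
  assumes "A \<subseteq> F" "w \<in> F\<^sup>\<bottom>"
  shows "u + w \<in> dual_cone A \<longleftrightarrow> u \<in> dual_cone A"
proof -
  have "a \<bullet> (u + w) = a \<bullet> u" if "a \<in> A" for a
    using assms that by (auto simp: orthogonal_comp_def orthogonal_def inner_add_right)
  then show ?thesis
    unfolding dual_cone_def by auto
qed

lemma ray_minus_eq_ray_plus_uminus: "ray_minus A v = ray_plus A (- v)"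
proof (intro equalityI subsetI)
  fix x assume "x \<in> ray_minus A v"
  then obtain a t where "a \<in> A" "t \<le> 0" "x = a + (- t) *\<^sub>R (- v)"
    unfolding ray_minus_def by auto
  then show "x \<in> ray_plus A (- v)"
    unfolding ray_plus_def by (force intro: exI[of _ "- t"])
next
  fix x assume "x \<in> ray_plus A (- v)"
  then obtain a t where "a \<in> A" "0 \<le> t" "x = a + (- t) *\<^sub>R v"
    unfolding ray_plus_def by auto
  then show "x \<in> ray_minus A v"
    unfolding ray_minus_def by (force intro: exI[of _ "- t"])
qed

lemma subset_ray_plus: "A \<subseteq> ray_plus A v"
  unfolding ray_plus_def by (force intro: exI[of _ "0::real"])

lemma dual_cone_ray_plus:
  fixes A :: "'a::real_inner set"
  assumes "0 \<in> A"
  shows "dual_cone (ray_plus A v) = {y. 0 \<le> v \<bullet> y} \<inter> dual_cone A"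
proof (intro equalityI subsetI)
  fix y assume y: "y \<in> dual_cone (ray_plus A v)"
  have "v \<in> ray_plus A v"
    unfolding ray_plus_def by (rule CollectI, rule exI[of _ 0], rule exI[of _ 1]) (simp add: assms)
  then have "0 \<le> v \<bullet> y"
    using y unfolding dual_cone_def by force
  then show "y \<in> {y. 0 \<le> v \<bullet> y} \<inter> dual_cone A"
    using y dual_cone_antimono[OF subset_ray_plus] by blast
next
  fix y assume "y \<in> {y. 0 \<le> v \<bullet> y} \<inter> dual_cone A"
  then show "y \<in> dual_cone (ray_plus A v)"
    unfolding dual_cone_def ray_plus_def by (auto simp: inner_add_left)
qed

text \<open>Moving from y a little in direction -u stays in D, so y is strictly inside the half-space.\<close>

lemma inner_pos_if_rel_interior_in_halfspace:
  fixes y :: "'a::real_inner"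
  assumes "subspace E" "u \<in> E" "u \<noteq> 0"
    and "y \<in> rel_interior_in E D" "D \<subseteq> {y. 0 \<le> u \<bullet> y}"
  shows "0 < u \<bullet> y"
proof -
  obtain e where "e > 0" and e: "ball y e \<inter> E \<subseteq> D" and "y \<in> E"
    using assms(4) unfolding rel_interior_in_def by blast
  define s where "s = e / (2 * norm u)"
  have "s > 0"
    using \<open>e > 0\<close> assms(3) by (simp add: s_def)
  have "y - s *\<^sub>R u \<in> ball y e"
    using \<open>e > 0\<close> assms(3) by (simp add: s_def dist_norm)
  moreover have "y - s *\<^sub>R u \<in> E"
    using \<open>y \<in> E\<close> assms(1,2) by (simp add: subspace_diff subspace_scale)
  ultimately have "0 \<le> u \<bullet> (y - s *\<^sub>R u)"
    using e assms(5) by blast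
  then have "s * (u \<bullet> u) \<le> u \<bullet> y"
    by (simp add: inner_diff_right)
  moreover have "0 < s * (u \<bullet> u)"
    using \<open>s > 0\<close> assms(3) by simp
  ultimately show ?thesis
    by linarith
qed

lemma inner_pos_if_rel_interior_in_dual_ray:
  assumes "subspace E" "u \<in> E" "u \<noteq> 0" "0 \<in> A"
    and "y \<in> rel_interior_in E (dual_cone (ray_plus A u))"
  shows "0 < u \<bullet> y"
  using inner_pos_if_rel_interior_in_halfspace[OF assms(1-3,5)] dual_cone_ray_plus[OF assms(4)]
  by blast

lemma rel_interior_in_dual_cone_project:
  fixes z :: "'a::real_inner"
  assumes "subspace E" "F \<subseteq> E" "A \<subseteq> F" "z \<in> F" "w \<in> F\<^sup>\<bottom>"
    and "z + w \<in> rel_interior_in E (dual_cone A)"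
  shows "z \<in> rel_interior_in F (dual_cone A)"
proof -
  obtain e where "e > 0" and e: "ball (z + w) e \<inter> E \<subseteq> dual_cone A" and "z + w \<in> E"
    using assms(6) unfolding rel_interior_in_def by blast
  have "w \<in> E"
    using \<open>z + w \<in> E\<close> assms(1,2,4) subspace_diff[of E "z + w" z] by auto
  have "z' \<in> dual_cone A" if "z' \<in> ball z e \<inter> F" for z'
  proof -
    have "z' + w \<in> ball (z + w) e \<inter> E"
      using that \<open>w \<in> E\<close> assms(1,2) by (auto simp: dist_norm intro: subspace_add)
    then show ?thesis
      using e dual_cone_add_orthogonal[OF assms(3,5)] by blast
  qed
  then show ?thesis
    unfolding rel_interior_in_def using \<open>e > 0\<close> assms(4) by blast
qed

lemma yao_yao_step_cells:
  "{ray_minus A v | A. A \<in> Pm} \<union> {ray_plus A v | A. A \<in> Pp} =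
     (\<lambda>A. ray_plus A (- v)) ` Pm \<union> (\<lambda>A. ray_plus A v) ` Pp"
  by (simp add: ray_minus_eq_ray_plus_uminus Setcompr_eq_image)

lemma yao_yao_affine_cells:
  assumes "yao_yao E P c"
  shows "affine E \<and> c \<in> E \<and> (\<forall>A\<in>P. c \<in> A \<and> A \<subseteq> E)"
  using assms
proof (induction rule: yao_yao.induct)
  case (base c)
  then show ?case by simp
next
  case (step E F v Pm c Pp)
  have ray: "c \<in> ray_plus A u \<and> ray_plus A u \<subseteq> E"
    if "c \<in> A" "A \<subseteq> F" "u \<in> vec_dir E" for A u
  proof -
    have "a + t *\<^sub>R u \<in> E" if "a \<in> A" for a t
    proof -
      obtain p q where "p \<in> E" "q \<in> E" "u = p - q"
        using \<open>u \<in> vec_dir E\<close> unfolding vec_dir_def by blast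
      moreover have "a \<in> E"
        using that \<open>A \<subseteq> F\<close> \<open>F \<subseteq> E\<close> by blast
      ultimately show ?thesis
        using \<open>affine E\<close> mem_affine_3_minus by blast
    qed
    then show ?thesis
      using \<open>c \<in> A\<close> subset_ray_plus unfolding ray_plus_def by blast
  qed
  have "- v \<in> vec_dir E"
    using \<open>v \<in> vec_dir E\<close> unfolding vec_dir_def by force
  then have "c \<in> ray_plus A (- v) \<and> ray_plus A (- v) \<subseteq> E" if "A \<in> Pm" for A
    using ray step.IH(1) that by simp
  moreover have "c \<in> ray_plus A v \<and> ray_plus A v \<subseteq> E" if "A \<in> Pp" for A
    using ray step.IH(2) that \<open>v \<in> vec_dir E\<close> by simp
  moreover have "c \<in> E"
    using step.IH(1) \<open>F \<subseteq> E\<close> by blast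
  ultimately show ?case
    unfolding yao_yao_step_cells using \<open>affine E\<close> by blast
qed

lemma yao_yao_subspace:
  assumes "yao_yao E P 0"
  shows "subspace E" "\<And>A. A \<in> P \<Longrightarrow> 0 \<in> A \<and> A \<subseteq> E"
  using yao_yao_affine_cells[OF assms] by (auto simp: subspace_affine)

lemma vec_dir_subspace: "subspace S \<Longrightarrow> vec_dir S = S"
  unfolding vec_dir_def by (force intro: subspace_diff exI[where x = 0] subspace_0)

lemma yao_yao_step_subspaces:
  assumes "yao_yao F P 0" "affine E" "F \<subseteq> E" "v \<in> vec_dir E" "v \<notin> vec_dir F"
  shows "subspace F" "subspace E" "v \<in> E" "v \<notin> F" "v \<noteq> 0"
proof -
  show "subspace F"
    using yao_yao_subspace(1)[OF assms(1)] .
  then show "subspace E"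
    using assms(2,3) by (auto simp: subspace_affine dest: subspace_0)
  show "v \<in> E" "v \<notin> F" "v \<noteq> 0"
    using assms(4,5) \<open>subspace E\<close> \<open>subspace F\<close> by (auto simp: vec_dir_subspace subspace_0)
qed

lemma orthogonal_comp_decomp:
  fixes y :: "'a::euclidean_space"
  assumes "subspace F"
  obtains z w where "z \<in> F" "w \<in> F\<^sup>\<bottom>" "y = z + w"
proof -
  have "y \<in> F + F\<^sup>\<bottom>"
    using subspace_sum_orthogonal_comp[OF assms] by simp
  then show ?thesis
    using that by (auto elim: set_plus_elim)
qed

lemma yao_yao_dual_cover:
  assumes "yao_yao E P 0"
  shows "E \<subseteq> \<Union> (dual_cone ` P)"
  using assms
proof (induction E P "0::'a::euclidean_space" rule: yao_yao.induct)
  case base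
  then show ?case by (auto simp: dual_cone_def)
next
  case (step E F v Pm Pp)
  note sub = yao_yao_step_subspaces[OF step.hyps(8,1,4,6,7)]
  have covered: "\<exists>A\<in>P. y \<in> dual_cone (ray_plus A u)"
    if P: "yao_yao F P 0" and cov: "F \<subseteq> \<Union> (dual_cone ` P)" and side: "0 \<le> u \<bullet> y"
      and zw: "z \<in> F" "w \<in> F\<^sup>\<bottom>" "y = z + w"
    for P u y z w
  proof -
    obtain A where "A \<in> P" "z \<in> dual_cone A"
      using cov zw(1) by blast
    moreover have "0 \<in> A" "A \<subseteq> F"
      using yao_yao_subspace(2)[OF P \<open>A \<in> P\<close>] by auto
    ultimately have "y \<in> dual_cone A"
      using dual_cone_add_orthogonal[OF \<open>A \<subseteq> F\<close> zw(2)] zw(3) by simp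
    then have "y \<in> dual_cone (ray_plus A u)"
      using dual_cone_ray_plus[OF \<open>0 \<in> A\<close>] side by blast
    then show ?thesis
      using \<open>A \<in> P\<close> by blast
  qed
  show ?case
    unfolding yao_yao_step_cells
  proof
    fix y assume "y \<in> E"
    obtain z w where zw: "z \<in> F" "w \<in> F\<^sup>\<bottom>" "y = z + w"
      using orthogonal_comp_decomp[OF sub(1)] .
    show "y \<in> \<Union> (dual_cone ` ((\<lambda>A. ray_plus A (- v)) ` Pm \<union> (\<lambda>A. ray_plus A v) ` Pp))"
    proof (cases "0 \<le> v \<bullet> y")
      case True
      then obtain A where "A \<in> Pp" "y \<in> dual_cone (ray_plus A v)"
        using covered[OF step.hyps(10,11) _ zw] by blast
      then show ?thesis
        by (intro UnionI[of "dual_cone (ray_plus A v)"]) auto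
    next
      case False
      then have "0 \<le> (- v) \<bullet> y"
        by simp
      then obtain A where "A \<in> Pm" "y \<in> dual_cone (ray_plus A (- v))"
        using covered[OF step.hyps(8,9) _ zw] by blast
      then show ?thesis
        by (intro UnionI[of "dual_cone (ray_plus A (- v))"]) auto
    qed
  qed
qed

lemma yao_yao_dual_rel_interior:
  assumes "yao_yao E P 0" "A \<in> P" "B \<in> P"
    and "y \<in> rel_interior_in E (dual_cone A)" "y \<in> rel_interior_in E (dual_cone B)"
  shows "dual_cone A = dual_cone B"
  using assms
proof (induction E P "0::'a::euclidean_space" arbitrary: A B y rule: yao_yao.induct)
  case base
  then show ?case by simp
next
  case (step E F v Pm Pp)
  note sub = yao_yao_step_subspaces[OF step.hyps(8,1,4,6,7)]
  have same_side: "dual_cone (ray_plus A u) = dual_cone (ray_plus B u)"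
    if P: "yao_yao F P 0" and AB: "A \<in> P" "B \<in> P"
      and IH: "\<And>A B z. A \<in> P \<Longrightarrow> B \<in> P \<Longrightarrow> z \<in> rel_interior_in F (dual_cone A) \<Longrightarrow>
                  z \<in> rel_interior_in F (dual_cone B) \<Longrightarrow> dual_cone A = dual_cone B"
      and y: "y \<in> rel_interior_in E (dual_cone (ray_plus A u))"
        "y \<in> rel_interior_in E (dual_cone (ray_plus B u))"
    for P A B u y
  proof -
    obtain z w where zw: "z \<in> F" "w \<in> F\<^sup>\<bottom>" "y = z + w"
      using orthogonal_comp_decomp[OF sub(1)] .
    have project: "z \<in> rel_interior_in F (dual_cone C)"
      if "C \<in> P" "y \<in> rel_interior_in E (dual_cone (ray_plus C u))" for C
    proof -
      have "y \<in> rel_interior_in E (dual_cone C)"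
        using that(2) rel_interior_in_mono[OF dual_cone_antimono[OF subset_ray_plus]] by blast
      then show ?thesis
        using rel_interior_in_dual_cone_project[OF sub(2) \<open>F \<subseteq> E\<close> _ zw(1,2)] zw(3)
          yao_yao_subspace(2)[OF P \<open>C \<in> P\<close>] by blast
    qed
    have "dual_cone A = dual_cone B"
      using IH[OF AB project[OF AB(1) y(1)] project[OF AB(2) y(2)]] .
    then show ?thesis
      using dual_cone_ray_plus yao_yao_subspace(2)[OF P] AB by metis
  qed
  have opposite_sides: False
    if "A \<in> Pm" "B \<in> Pp"
      and "y \<in> rel_interior_in E (dual_cone (ray_plus A (- v)))"
      and "y \<in> rel_interior_in E (dual_cone (ray_plus B v))"
    for A B y
  proof -
    have "0 < (- v) \<bullet> y"
      using inner_pos_if_rel_interior_in_dual_ray[OF sub(2) _ _ _ that(3)] sub(3,5)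
        yao_yao_subspace(2)[OF step.hyps(8) that(1)] subspace_neg[OF sub(2)] by simp
    moreover have "0 < v \<bullet> y"
      using inner_pos_if_rel_interior_in_dual_ray[OF sub(2) _ _ _ that(4)] sub(3,5)
        yao_yao_subspace(2)[OF step.hyps(10) that(2)] by simp
    ultimately show False
      by simp
  qed
  consider
      (minus) A' B' where "A' \<in> Pm" "B' \<in> Pm" "A = ray_plus A' (- v)" "B = ray_plus B' (- v)"
    | (plus) A' B' where "A' \<in> Pp" "B' \<in> Pp" "A = ray_plus A' v" "B = ray_plus B' v"
    | (minus_plus) A' B' where "A' \<in> Pm" "B' \<in> Pp" "A = ray_plus A' (- v)" "B = ray_plus B' v"
    | (plus_minus) A' B' where "A' \<in> Pp" "B' \<in> Pm" "A = ray_plus A' v" "B = ray_plus B' (- v)"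
    using step.prems(1,2) unfolding yao_yao_step_cells by blast
  then show ?case
  proof cases
    case minus
    then show ?thesis
      using same_side[OF step.hyps(8) minus(1,2) step.hyps(9)] step.prems(3,4) by simp
  next
    case plus
    then show ?thesis
      using same_side[OF step.hyps(10) plus(1,2) step.hyps(11)] step.prems(3,4) by simp
  next
    case minus_plus
    then show ?thesis
      using opposite_sides[OF minus_plus(1,2)] step.prems(3,4) by blast
  next
    case plus_minus
    then show ?thesis
      using opposite_sides[OF plus_minus(2,1)] step.prems(3,4) by blast
  qed
qed

theorem mainTheorem2:
  fixes P :: "'a::euclidean_space set set"
  assumes "yao_yao (UNIV :: 'a set) P 0"
  shows "is_partition (UNIV :: 'a set) (dual_cone ` P)"
  unfolding is_partition_def
proof (intro conjI ballI impI)
  show "\<Union> (dual_cone ` P) = UNIV"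
    using yao_yao_dual_cover[OF assms] by blast
next
  fix X Y assume "X \<in> dual_cone ` P" "Y \<in> dual_cone ` P" "X \<noteq> Y"
  then obtain A B where "A \<in> P" "B \<in> P" "X = dual_cone A" "Y = dual_cone B"
    by blast
  then show "interior X \<inter> interior Y = {}"
    using yao_yao_dual_rel_interior[OF assms] \<open>X \<noteq> Y\<close>
    unfolding rel_interior_in_UNIV by blast
qed

end
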